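(* Let $\sigma:\mathbb{R}\to\mathbb{R}$ be an increasing odd homeomorphism and let $(p_n=(x_n,y_n))_{n\geq0}$ be a sequence in $\mathbb{R}^2$ tending to $0$, such that either all the $x_n$ are nonzero and of the same sign, or all the $y_n$ are nonzero and of the same sign. Then the closure of $\{w(p_n):n\in\mathbb N,\ w\in\mathcal M_\sigma(X)\}$ contains: $Ox_+=\mathbb{R}_{\geq0}\times\{0\}$ if all $y_n>0$; $Ox_-=\mathbb{R}_{\leq0}\times\{0\}$ if all $y_n<0$; $Oy_+=\{0\}\times\mathbb{R}_{\geq0}$ if all $x_n>0$; $Oy_-=\{0\}\times\mathbb{R}_{\leq0}$ if all $x_n<0$.
   Context: $h_\sigma(x,y)=(x+\sigma^{-1}(y),y)$, $v_\sigma(x,y)=(x,\sigma(x)+y)$, and $\mathcal M_\sigma(X)$ is the monoid (containing the identity) generated by $h_\sigma$ and $v_\sigma$ under composition. *)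

theory Defs
  imports "HOL-Analysis.Analysis"
begin

definition hmap :: "(real \<Rightarrow> real) \<Rightarrow> real \<times> real \<Rightarrow> real \<times> real" where
  "hmap \<sigma> = (\<lambda>(x, y). (x + inv \<sigma> y, y))"

definition vmap :: "(real \<Rightarrow> real) \<Rightarrow> real \<times> real \<Rightarrow> real \<times> real" where
  "vmap \<sigma> = (\<lambda>(x, y). (x, \<sigma> x + y))"

inductive_set Msigma :: "(real \<Rightarrow> real) \<Rightarrow> (real \<times> real \<Rightarrow> real \<times> real) set"
  for \<sigma> :: "real \<Rightarrow> real" where
  id_in: "id \<in> Msigma \<sigma>"
| h_comp: "w \<in> Msigma \<sigma> \<Longrightarrow> hmap \<sigma> \<circ> w \<in> Msigma \<sigma>"
| v_comp: "w \<in> Msigma \<sigma> \<Longrightarrow> vmap \<sigma> \<circ> w \<in> Msigma \<sigma>"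

end

theory Submission
  imports Defs
begin

text \<open>The k-th power of h moves p = (x, y) to (x + k \<sigma>\<inverse>(y), y): the h-orbit of p is an
  arithmetic progression on the horizontal line through p, with step \<sigma>\<inverse>(y) of the sign of y.
  As x_n, y_n and \<sigma>\<inverse>(y_n) all tend to 0, taking k = \<lceil>(t - x_n) / \<sigma>\<inverse>(y_n)\<rceil> gives orbit
  points converging to (t, 0) for every t on the side of 0 given by the sign of the y_n. The
  vertical half-axes are reached in the same way with the powers of v, whose step is \<sigma>(x_n).\<close>

lemma ceiling_grid_dist_le:
  fixes a d t :: real
  assumes "d \<noteq> 0" and "0 \<le> t * d"
  shows "\<bar>a + real (nat \<lceil>(t - a) / d\<rceil>) * d - t\<bar> \<le> \<bar>a\<bar> + \<bar>d\<bar>"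
proof (cases "(t - a) / d \<le> 0")
  case True
  then have "0 \<le> (a - t) * d"
    by (metis divide_le_0_iff minus_diff_eq neg_0_le_iff_le zero_le_mult_iff)
  then have "\<bar>a - t\<bar> \<le> \<bar>a\<bar>"
    using assms by (cases "d > 0") (auto simp: zero_le_mult_iff)
  then show ?thesis using True by simp
next
  case False
  define q where "q = (t - a) / d"
  define k where "k = real (nat \<lceil>q\<rceil>)"
  have "k = of_int \<lceil>q\<rceil>" using False by (simp add: k_def q_def)
  then have "\<bar>k - q\<bar> \<le> 1"
    using le_of_int_ceiling[of q] of_int_ceiling_le_add_one[of q] by linarith
  have "\<bar>a + k * d - t\<bar> = \<bar>k - q\<bar> * \<bar>d\<bar>"
    using assms(1) by (simp add: q_def field_simps flip: abs_mult)
  also have "\<dots> \<le> 1 * \<bar>d\<bar>"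
    using \<open>\<bar>k - q\<bar> \<le> 1\<close> by (rule mult_right_mono) simp
  finally show ?thesis by (simp add: k_def q_def)
qed

lemma grid_tendsto:
  fixes a d :: "nat \<Rightarrow> real"
  assumes "a \<longlonglongrightarrow> 0" and "d \<longlonglongrightarrow> 0"
    and "\<And>n. d n \<noteq> 0" and "\<And>n. 0 \<le> t * d n"
  obtains k :: "nat \<Rightarrow> nat" where "(\<lambda>n. a n + real (k n) * d n) \<longlonglongrightarrow> t"
proof
  let ?k = "\<lambda>n. nat \<lceil>(t - a n) / d n\<rceil>"
  have "(\<lambda>n. \<bar>a n\<bar> + \<bar>d n\<bar>) \<longlonglongrightarrow> 0"
    using tendsto_add[OF tendsto_rabs_zero[OF assms(1)] tendsto_rabs_zero[OF assms(2)]] by simp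
  then have "(\<lambda>n. a n + real (?k n) * d n - t) \<longlonglongrightarrow> 0"
    by (rule Lim_null_comparison[rotated]) (simp add: ceiling_grid_dist_le assms)
  then show "(\<lambda>n. a n + real (?k n) * d n) \<longlonglongrightarrow> t"
    by (rule LIM_zero_cancel)
qed

lemma funpow_hmap: "(hmap \<sigma> ^^ k) z = (fst z + real k * inv \<sigma> (snd z), snd z)"
  by (induction k) (simp_all add: hmap_def split_beta algebra_simps)

lemma funpow_vmap: "(vmap \<sigma> ^^ k) z = (fst z, snd z + real k * \<sigma> (fst z))"
  by (induction k) (simp_all add: vmap_def split_beta algebra_simps)

lemma funpow_hmap_in_Msigma: "hmap \<sigma> ^^ k \<in> Msigma \<sigma>"
  by (induction k) (simp_all only: funpow.simps Msigma.id_in Msigma.h_comp)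

lemma funpow_vmap_in_Msigma: "vmap \<sigma> ^^ k \<in> Msigma \<sigma>"
  by (induction k) (simp_all only: funpow.simps Msigma.id_in Msigma.v_comp)

lemma strict_mono_sgn:
  fixes f :: "real \<Rightarrow> real"
  assumes "strict_mono f" and "f 0 = 0"
  shows "sgn (f x) = sgn x"
  using strict_mono_less[OF assms(1), of 0 x] strict_mono_less[OF assms(1), of x 0] assms(2)
  by (cases x "0::real" rule: linorder_cases) simp_all

lemma strict_mono_homeomorphism_fixing_0:
  fixes \<sigma> :: "real \<Rightarrow> real"
  assumes "strict_mono \<sigma>" and "\<exists>\<tau>. homeomorphism UNIV UNIV \<sigma> \<tau>" and "\<sigma> 0 = 0"
  shows "isCont \<sigma> 0" and "isCont (inv \<sigma>) 0"
    and "sgn (\<sigma> x) = sgn x" and "sgn (inv \<sigma> x) = sgn x"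
proof -
  obtain \<tau> where "homeomorphism UNIV UNIV \<sigma> \<tau>"
    using assms(2) by blast
  then have "surj \<sigma>" and \<tau>\<sigma>: "\<And>x. \<tau> (\<sigma> x) = x"
    and "continuous_on UNIV \<sigma>" and "continuous_on UNIV \<tau>"
    by (auto simp: homeomorphism_def)
  then have "inv \<sigma> = \<tau>"
    by (metis surj_imp_inv_eq)
  show "isCont \<sigma> 0" and "isCont (inv \<sigma>) 0"
    using \<open>continuous_on UNIV \<sigma>\<close> \<open>continuous_on UNIV \<tau>\<close> \<open>inv \<sigma> = \<tau>\<close>
    by (simp_all add: continuous_on_eq_continuous_at)
  have "\<tau> 0 = 0"
    using \<tau>\<sigma>[of 0] assms(3) by simp
  moreover have "strict_mono \<tau>"
    using strict_mono_inv[OF assms(1) \<open>surj \<sigma>\<close> \<tau>\<sigma>] .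
  ultimately show "sgn (\<sigma> x) = sgn x" and "sgn (inv \<sigma> x) = sgn x"
    using strict_mono_sgn[OF assms(1,3)] strict_mono_sgn[of \<tau>] \<open>inv \<sigma> = \<tau>\<close> by simp_all
qed

lemma sgn_preserving_tendsto_0:
  fixes f :: "real \<Rightarrow> real"
  assumes "isCont f 0" and "\<And>x. sgn (f x) = sgn x" and "a \<longlonglongrightarrow> 0"
  shows "(\<lambda>n. f (a n)) \<longlonglongrightarrow> 0"
proof -
  have "f 0 = 0"
    using assms(2)[of 0] by (simp add: sgn_eq_0_iff)
  then show ?thesis
    using isCont_tendsto_compose[OF assms(1,3)] by simp
qed

lemma sgn_preserving_mult_nonneg:
  fixes f :: "real \<Rightarrow> real"
  assumes "\<And>x. sgn (f x) = sgn x" and "0 \<le> t * y"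
  shows "0 \<le> t * f y"
proof -
  have "sgn (t * f y) = sgn (t * y)"
    by (simp add: sgn_mult assms(1))
  then show ?thesis
    using assms(2) by (metis sgn_less not_le)
qed

lemma closure_hmap_orbits_contains_axis_point:
  fixes p :: "nat \<Rightarrow> real \<times> real"
  assumes "p \<longlonglongrightarrow> 0" and "isCont (inv \<sigma>) 0" and "\<And>y. sgn (inv \<sigma> y) = sgn y"
    and "\<And>n. snd (p n) \<noteq> 0" and "\<And>n. 0 \<le> t * snd (p n)"
  shows "(t, 0) \<in> closure {w (p n) | n w. w \<in> Msigma \<sigma>}"
proof -
  have x: "(\<lambda>n. fst (p n)) \<longlonglongrightarrow> 0" and y: "(\<lambda>n. snd (p n)) \<longlonglongrightarrow> 0"
    using tendsto_fst[OF assms(1)] tendsto_snd[OF assms(1)] by simp_all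
  have "(\<lambda>n. inv \<sigma> (snd (p n))) \<longlonglongrightarrow> 0"
    using sgn_preserving_tendsto_0[OF assms(2,3) y] .
  moreover have "inv \<sigma> (snd (p n)) \<noteq> 0" for n
    using assms(3,4) by (metis sgn_eq_0_iff)
  moreover have "0 \<le> t * inv \<sigma> (snd (p n))" for n
    using sgn_preserving_mult_nonneg[OF assms(3,5)] .
  ultimately obtain k where "(\<lambda>n. fst (p n) + real (k n) * inv \<sigma> (snd (p n))) \<longlonglongrightarrow> t"
    using grid_tendsto[OF x] by blast
  then have "(\<lambda>n. (hmap \<sigma> ^^ k n) (p n)) \<longlonglongrightarrow> (t, 0)"
    using tendsto_Pair[OF _ y] by (simp add: funpow_hmap)
  moreover have "(hmap \<sigma> ^^ k n) (p n) \<in> {w (p n) | n w. w \<in> Msigma \<sigma>}" for n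
    using funpow_hmap_in_Msigma by blast
  ultimately show ?thesis
    unfolding closure_sequential by (intro exI conjI allI)
qed

lemma closure_vmap_orbits_contains_axis_point:
  fixes p :: "nat \<Rightarrow> real \<times> real"
  assumes "p \<longlonglongrightarrow> 0" and "isCont \<sigma> 0" and "\<And>x. sgn (\<sigma> x) = sgn x"
    and "\<And>n. fst (p n) \<noteq> 0" and "\<And>n. 0 \<le> t * fst (p n)"
  shows "(0, t) \<in> closure {w (p n) | n w. w \<in> Msigma \<sigma>}"
proof -
  have x: "(\<lambda>n. fst (p n)) \<longlonglongrightarrow> 0" and y: "(\<lambda>n. snd (p n)) \<longlonglongrightarrow> 0"
    using tendsto_fst[OF assms(1)] tendsto_snd[OF assms(1)] by simp_all
  have "(\<lambda>n. \<sigma> (fst (p n))) \<longlonglongrightarrow> 0"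
    using sgn_preserving_tendsto_0[OF assms(2,3) x] .
  moreover have "\<sigma> (fst (p n)) \<noteq> 0" for n
    using assms(3,4) by (metis sgn_eq_0_iff)
  moreover have "0 \<le> t * \<sigma> (fst (p n))" for n
    using sgn_preserving_mult_nonneg[OF assms(3,5)] .
  ultimately obtain k where "(\<lambda>n. snd (p n) + real (k n) * \<sigma> (fst (p n))) \<longlonglongrightarrow> t"
    using grid_tendsto[OF y] by blast
  then have "(\<lambda>n. (vmap \<sigma> ^^ k n) (p n)) \<longlonglongrightarrow> (0, t)"
    using tendsto_Pair[OF x] by (simp add: funpow_vmap)
  moreover have "(vmap \<sigma> ^^ k n) (p n) \<in> {w (p n) | n w. w \<in> Msigma \<sigma>}" for n
    using funpow_vmap_in_Msigma by blast
  ultimately show ?thesis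
    unfolding closure_sequential by (intro exI conjI allI)
qed

theorem lemma4:
  fixes \<sigma> :: "real \<Rightarrow> real" and p :: "nat \<Rightarrow> real \<times> real"
  assumes incr: "strict_mono \<sigma>"
    and homeo: "\<exists>\<tau>. homeomorphism UNIV UNIV \<sigma> \<tau>"
    and odd: "\<And>x. \<sigma> (- x) = - \<sigma> x"
    and lim: "p \<longlonglongrightarrow> 0"
    and signs: "(\<forall>n. fst (p n) > 0) \<or> (\<forall>n. fst (p n) < 0) \<or>
                (\<forall>n. snd (p n) > 0) \<or> (\<forall>n. snd (p n) < 0)"
  shows "((\<forall>n. snd (p n) > 0) \<longrightarrow>
            {(t, 0) | t. t \<ge> 0} \<subseteq> closure {w (p n) | n w. w \<in> Msigma \<sigma>}) \<and>
         ((\<forall>n. snd (p n) < 0) \<longrightarrow>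
            {(t, 0) | t. t \<le> 0} \<subseteq> closure {w (p n) | n w. w \<in> Msigma \<sigma>}) \<and>
         ((\<forall>n. fst (p n) > 0) \<longrightarrow>
            {(0, t) | t. t \<ge> 0} \<subseteq> closure {w (p n) | n w. w \<in> Msigma \<sigma>}) \<and>
         ((\<forall>n. fst (p n) < 0) \<longrightarrow>
            {(0, t) | t. t \<le> 0} \<subseteq> closure {w (p n) | n w. w \<in> Msigma \<sigma>})"
proof -
  let ?S = "{w (p n) | n w. w \<in> Msigma \<sigma>}"
  have "\<sigma> 0 = 0"
    using odd[of 0] by simp
  note \<sigma> = strict_mono_homeomorphism_fixing_0[OF incr homeo this]
  note horizontal = closure_hmap_orbits_contains_axis_point[OF lim \<sigma>(2,4)]
    and vertical = closure_vmap_orbits_contains_axis_point[OF lim \<sigma>(1,3)]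
  show ?thesis
  proof (intro conjI impI subsetI; clarify)
    fix t :: real
    show "(t, 0) \<in> closure ?S" if "\<forall>n. 0 < snd (p n)" and "0 \<le> t"
      using that by (intro horizontal) (simp_all add: dual_order.strict_implies_not_eq less_imp_le)
    show "(t, 0) \<in> closure ?S" if "\<forall>n. snd (p n) < 0" and "t \<le> 0"
      using that by (intro horizontal) (simp_all add: less_imp_neq mult_nonpos_nonpos less_imp_le)
    show "(0, t) \<in> closure ?S" if "\<forall>n. 0 < fst (p n)" and "0 \<le> t"
      using that by (intro vertical) (simp_all add: dual_order.strict_implies_not_eq less_imp_le)
    show "(0, t) \<in> closure ?S" if "\<forall>n. fst (p n) < 0" and "t \<le> 0"
      using that by (intro vertical) (simp_all add: less_imp_neq mult_nonpos_nonpos less_imp_le)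
  qed
qed

end
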